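(* Assume the input embeddings $e_1,\dots,e_N$ are orthonormal, the output embeddings $u_1,\dots,u_M$ are orthonormal, and $p(x)>0$ for all $x\in[N]$. Let $\Pi$ denote the orthogonal projection of $\mathbb{R}^d$ onto $\mathrm{span}\{u_i-u_j: i,j\in[M]\}$. Then for any initialization $W_0$, the gradient flow $\dot W_t=-\nabla\mathcal{L}(W_t)$ satisfies \[ \lim_{t\to\infty}\frac{W_t}{\log t}=\kappa\sum_{x\in[N]}\Pi(u_{f^*(x)})\otimes e_x \] for some constant $\kappa>0$.
   Context: Integers $N,M\ge2$, $d\ge\max(N,M)$. Fixed embeddings $e_1,\dots,e_N,u_1,\dots,u_M\in\mathbb{R}^d$, target $f^*:[N]\to[M]$, probability distribution $p$ on $[N]$. For $W\in\mathbb{R}^{d\times d}$: $p_W(y\mid x)=\exp(u_y^\top We_x)/\sum_{z\in[M]}\exp(u_z^\top We_x)$, $\mathcal{L}(W)=-\sum_x p(x)\log p_W(f^*(x)\mid x)$. Gradients are for the Frobenius inner product; $u\otimes e:=ue^\top$. *)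

theory Defs
  imports "HOL-Analysis.Analysis"
begin

text \<open>Matrices W in R^{d x d} are elements of real^'d^'d (row-indexed); the inner
product on this type is the Frobenius inner product sum_i sum_j A_ij B_ij.\<close>

definition outer :: "real^'d \<Rightarrow> real^'d \<Rightarrow> real^'d^'d" where
  "outer u e = (\<chi> i j. u $ i * e $ j)"

definition pW :: "('n \<Rightarrow> real^'d) \<Rightarrow> ('m::finite \<Rightarrow> real^'d) \<Rightarrow> real^'d^'d \<Rightarrow> 'n \<Rightarrow> 'm \<Rightarrow> real" where
  "pW e u W x y = exp (u y \<bullet> (W *v e x)) / (\<Sum>z\<in>UNIV. exp (u z \<bullet> (W *v e x)))"

definition loss :: "('n::finite \<Rightarrow> real) \<Rightarrow> ('n \<Rightarrow> real^'d) \<Rightarrow> ('m::finite \<Rightarrow> real^'d)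
    \<Rightarrow> ('n \<Rightarrow> 'm) \<Rightarrow> real^'d^'d \<Rightarrow> real" where
  "loss p e u fstar W = - (\<Sum>x\<in>UNIV. p x * ln (pW e u W x (fstar x)))"

definition orthonormal_family :: "('i \<Rightarrow> 'a::real_inner) \<Rightarrow> bool" where
  "orthonormal_family v \<longleftrightarrow> (\<forall>i j. v i \<bullet> v j = (if i = j then 1 else 0))"

definition orth_proj :: "'a::real_inner set \<Rightarrow> 'a \<Rightarrow> 'a" where
  "orth_proj S v = (THE q. q \<in> S \<and> (\<forall>s\<in>S. (v - q) \<bullet> s = 0))"

end

theory Submission
  imports Defs "HOL-Real_Asymp.Real_Asymp"
begin

text \<open>The matrices \<open>u_y \<otimes> e_x\<close> are orthonormal and the gradient of the loss is a linear
combination of them. Hence the component of \<open>W_t\<close> orthogonal to them is conserved, while for each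
input \<open>x\<close> the coordinates \<open>z_y = \<langle>W_t, u_y \<otimes> e_x\<rangle>\<close> follow the softmax flow
\<open>z_y' = p(x) (\<delta>(y, c) - softmax(z)_y)\<close> with target \<open>c = f*(x)\<close>. Along this flow each margin
\<open>m_y = z_c - z_y\<close>, \<open>y \<noteq> c\<close>, satisfies \<open>k \<le> (exp m_y)' \<le> K\<close> for constants \<open>0 < k \<le> K\<close>,
so \<open>m_y \<sim> ln t\<close>; since \<open>\<Sum>_y z_y\<close> is conserved, \<open>z_y / ln t \<rightarrow> \<delta>(y, c) - 1/M\<close>.
Finally \<open>\<Sum>_y (\<delta>(y, c) - 1/M) u_y = \<Pi> u_c\<close>, so the limit holds with \<open>\<kappa> = 1\<close>.\<close>

lemma DERIV_nonneg_imp_increasing_nonneg: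
  fixes f f' :: "real \<Rightarrow> real"
  assumes deriv: "\<And>t. t \<ge> 0 \<Longrightarrow> (f has_real_derivative f' t) (at t within {0..})"
    and nonneg: "\<And>t. t \<ge> 0 \<Longrightarrow> f' t \<ge> 0"
    and "0 \<le> s" "s \<le> t"
  shows "f s \<le> f t"
proof (rule DERIV_nonneg_imp_increasing_open[OF \<open>s \<le> t\<close>])
  fix x assume x: "s < x" "x < t"
  then have "x > 0" using \<open>0 \<le> s\<close> by linarith
  have "(f has_real_derivative f' x) (at x within {0<..})"
    by (rule DERIV_subset[OF deriv]) (use \<open>x > 0\<close> in auto)
  then have "(f has_real_derivative f' x) (at x)"
    using at_within_open[of x "{0<..}"] \<open>x > 0\<close> by simp
  then show "\<exists>y. DERIV f x :> y \<and> y \<ge> 0" using nonneg \<open>x > 0\<close> by auto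
next
  have "continuous_on {0..} f"
    unfolding continuous_on_eq_continuous_within
    by (intro ballI DERIV_continuous[OF deriv]) simp
  then show "continuous_on {s..t} f" by (rule continuous_on_subset) (use \<open>0 \<le> s\<close> in auto)
qed

lemma DERIV_ge_imp_linear_lower_bound:
  fixes f f' :: "real \<Rightarrow> real"
  assumes "\<And>t. t \<ge> 0 \<Longrightarrow> (f has_real_derivative f' t) (at t within {0..})"
    and "\<And>t. t \<ge> 0 \<Longrightarrow> k \<le> f' t" and "t \<ge> 0"
  shows "f 0 + k * t \<le> f t"
proof -
  have "(\<lambda>t. f t - k * t) 0 \<le> (\<lambda>t. f t - k * t) t"
    by (rule DERIV_nonneg_imp_increasing_nonneg[where f' = "\<lambda>t. f' t - k"])
       (use assms in \<open>auto intro!: derivative_eq_intros\<close>)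
  then show ?thesis by simp
qed

lemma DERIV_le_imp_linear_upper_bound:
  fixes f f' :: "real \<Rightarrow> real"
  assumes "\<And>t. t \<ge> 0 \<Longrightarrow> (f has_real_derivative f' t) (at t within {0..})"
    and "\<And>t. t \<ge> 0 \<Longrightarrow> f' t \<le> K" and "t \<ge> 0"
  shows "f t \<le> f 0 + K * t"
proof -
  have "- f 0 + (- K) * t \<le> - f t"
    by (rule DERIV_ge_imp_linear_lower_bound[where f' = "\<lambda>t. - f' t"])
       (use assms in \<open>auto intro!: derivative_eq_intros\<close>)
  then show ?thesis by simp
qed

lemma tendsto_div_ln_of_ln_linear_bounds:
  fixes g :: "real \<Rightarrow> real"
  assumes "A > 0" "k > 0" "K > 0"
    and "\<And>t. t \<ge> 0 \<Longrightarrow> ln (A + k * t) \<le> g t \<and> g t \<le> ln (A + K * t)"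
  shows "((\<lambda>t. g t / ln t) \<longlongrightarrow> 1) at_top"
proof (rule tendsto_sandwich)
  show "((\<lambda>t. ln (A + k * t) / ln t) \<longlongrightarrow> 1) at_top"
    "((\<lambda>t. ln (A + K * t) / ln t) \<longlongrightarrow> 1) at_top"
    using assms by real_asymp+
  show "\<forall>\<^sub>F t in at_top. ln (A + k * t) / ln t \<le> g t / ln t"
    "\<forall>\<^sub>F t in at_top. g t / ln t \<le> ln (A + K * t) / ln t"
    using eventually_gt_at_top[of 1]
    by (eventually_elim, use assms(4) in \<open>auto intro!: divide_right_mono\<close>)+
qed

definition softmax :: "('m::finite \<Rightarrow> real) \<Rightarrow> 'm \<Rightarrow> real" where
  "softmax z y = exp (z y) / (\<Sum>w\<in>UNIV. exp (z w))"

lemma sum_exp_pos: "(\<Sum>w\<in>(UNIV::'m::finite set). exp (z w :: real)) > 0"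
  by (rule sum_pos) auto

lemma softmax_pos: "softmax z y > 0"
  unfolding softmax_def by (intro divide_pos_pos sum_pos) auto

lemma sum_softmax: "(\<Sum>y\<in>UNIV. softmax z y) = 1"
  using sum_exp_pos[of z] unfolding softmax_def by (simp add: sum_divide_distrib[symmetric])

lemma softmax_le_1: "softmax z y \<le> 1"
proof -
  have "softmax z y \<le> (\<Sum>y\<in>UNIV. softmax z y)"
    by (rule member_le_sum) (auto intro: less_imp_le softmax_pos)
  then show ?thesis by (simp add: sum_softmax)
qed

lemma softmax_mono: "z y \<le> z w \<Longrightarrow> softmax z y \<le> softmax z w"
  unfolding softmax_def by (intro divide_right_mono) (auto intro: sum_nonneg)

lemma inverse_softmax: "1 / softmax z c = (\<Sum>w\<in>UNIV. exp (z w - z c))"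
  using sum_exp_pos[of z] unfolding softmax_def by (simp add: exp_diff sum_divide_distrib)

lemma softmax_ratio: "softmax z w / softmax z y = exp (z w - z y)"
  using sum_exp_pos[of z] unfolding softmax_def by (simp add: exp_diff)

locale softmax_flow =
  fixes a :: real and c :: "'m::finite" and z :: "real \<Rightarrow> 'm \<Rightarrow> real"
  assumes rate_pos: "a > 0"
    and has_deriv: "\<And>t y. t \<ge> 0 \<Longrightarrow> ((\<lambda>t. z t y) has_real_derivative
          a * ((if y = c then 1 else 0) - softmax (z t) y)) (at t within {0..})"
begin

lemma margin_ge_initial:
  assumes "t \<ge> 0"
  shows "z 0 c - z 0 y \<le> z t c - z t y"
proof -
  have "(\<lambda>t. z t c - z t y) 0 + 0 * t \<le> (\<lambda>t. z t c - z t y) t"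
  proof (rule DERIV_ge_imp_linear_lower_bound)
    fix t :: real assume "t \<ge> 0"
    show "((\<lambda>t. z t c - z t y) has_real_derivative
        a * (1 - softmax (z t) c) - a * ((if y = c then 1 else 0) - softmax (z t) y)) (at t within {0..})"
      using has_deriv[OF \<open>t \<ge> 0\<close>, of c] has_deriv[OF \<open>t \<ge> 0\<close>, of y]
      by (auto intro!: derivative_eq_intros)
    have "a * (1 - softmax (z t) c) \<ge> 0" "a * softmax (z t) y \<ge> 0"
      using rate_pos softmax_le_1[of "z t" c] softmax_pos[of "z t" y] by simp_all
    then show "0 \<le> a * (1 - softmax (z t) c) - a * ((if y = c then 1 else 0) - softmax (z t) y)"
      by (auto simp: algebra_simps)
  qed (use assms in simp)
  then show ?thesis by simp
qed

lemma softmax_target_lower_bound: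
  assumes "t \<ge> 0"
  shows "1 / (\<Sum>w\<in>UNIV. exp (z 0 w - z 0 c)) \<le> softmax (z t) c"
proof -
  have "1 / softmax (z t) c \<le> (\<Sum>w\<in>UNIV. exp (z 0 w - z 0 c))"
    unfolding inverse_softmax
  proof (rule sum_mono)
    fix w
    show "exp (z t w - z t c) \<le> exp (z 0 w - z 0 c)"
      using margin_ge_initial[OF assms, of w] by simp
  qed
  moreover have "(\<Sum>w\<in>UNIV. exp (z 0 w - z 0 c)) > 0"
    by (rule sum_pos) auto
  ultimately show ?thesis
    using softmax_pos[of "z t" c] by (simp add: divide_simps mult.commute)
qed

text \<open>Two non-target coordinates are pulled towards each other: the larger one loses more mass.\<close>
lemma nontarget_gap_le:
  assumes "t \<ge> 0" "y \<noteq> c" "w \<noteq> c"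
  shows "\<bar>z t y - z t w\<bar> \<le> \<bar>z 0 y - z 0 w\<bar>"
proof -
  have "(\<lambda>t. (z t y - z t w)\<^sup>2) t \<le> (\<lambda>t. (z t y - z t w)\<^sup>2) 0 + 0 * t"
  proof (rule DERIV_le_imp_linear_upper_bound)
    fix t :: real assume "t \<ge> 0"
    show "((\<lambda>t. (z t y - z t w)\<^sup>2) has_real_derivative
        - 2 * a * ((z t y - z t w) * (softmax (z t) y - softmax (z t) w))) (at t within {0..})"
      using has_deriv[OF \<open>t \<ge> 0\<close>, of y] has_deriv[OF \<open>t \<ge> 0\<close>, of w] assms(2,3)
      by (auto intro!: derivative_eq_intros simp: algebra_simps)
    have "(z t y - z t w) * (softmax (z t) y - softmax (z t) w) \<ge> 0"
      using softmax_mono[of "z t" y w] softmax_mono[of "z t" w y]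
      by (cases "z t y \<le> z t w") (auto intro: mult_nonpos_nonpos)
    then show "- 2 * a * ((z t y - z t w) * (softmax (z t) y - softmax (z t) w)) \<le> 0"
      using rate_pos by simp
  qed (use assms in simp)
  then show ?thesis by (simp add: abs_le_square_iff)
qed

lemma exp_margin_has_deriv:
  assumes "t \<ge> 0" "y \<noteq> c"
  shows "((\<lambda>t. exp (z t c - z t y)) has_real_derivative
           a * softmax (z t) c * (1 + (\<Sum>w\<in>UNIV - {c}. exp (z t w - z t y)))) (at t within {0..})"
proof -
  let ?s = "softmax (z t)"
  have "((\<lambda>t. z t c - z t y) has_real_derivative a * (1 - ?s c) + a * ?s y) (at t within {0..})"
    using DERIV_diff[OF has_deriv[OF assms(1), of c] has_deriv[OF assms(1), of y]] assms(2)
    by (simp add: algebra_simps)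
  then have "((\<lambda>t. exp (z t c - z t y)) has_real_derivative
      exp (z t c - z t y) * (a * (1 - ?s c) + a * ?s y)) (at t within {0..})"
    by (rule DERIV_chain2[OF DERIV_exp])
  moreover have "exp (z t c - z t y) * (a * (1 - ?s c) + a * ?s y)
      = a * ?s c * (1 + (\<Sum>w\<in>UNIV - {c}. exp (z t w - z t y)))"
  proof -
    have ratio: "exp (z t c - z t y) * ?s w = ?s c * exp (z t w - z t y)" for w
      using softmax_pos[of "z t" y] by (simp add: softmax_ratio[symmetric])
    have "1 - ?s c = (\<Sum>w\<in>UNIV - {c}. ?s w)"
      using sum_softmax[of "z t"] by (simp add: sum.remove[of UNIV c])
    then have "exp (z t c - z t y) * (a * (1 - ?s c) + a * ?s y)
        = a * ((\<Sum>w\<in>UNIV - {c}. exp (z t c - z t y) * ?s w) + exp (z t c - z t y) * ?s y)"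
      by (simp add: sum_distrib_left distrib_left mult.left_commute)
    also have "\<dots> = a * ?s c * (1 + (\<Sum>w\<in>UNIV - {c}. exp (z t w - z t y)))"
      unfolding ratio by (simp add: sum_distrib_left distrib_left mult.assoc)
    finally show ?thesis .
  qed
  ultimately show ?thesis by simp
qed

lemma margin_div_ln_tendsto:
  assumes "y \<noteq> c"
  shows "((\<lambda>t. (z t c - z t y) / ln t) \<longlongrightarrow> 1) at_top"
proof -
  define h where "h t = exp (z t c - z t y)" for t
  define h' where "h' t = a * softmax (z t) c * (1 + (\<Sum>w\<in>UNIV - {c}. exp (z t w - z t y)))" for t
  define k where "k = a / (\<Sum>w\<in>UNIV. exp (z 0 w - z 0 c))"
  define K where "K = a * (1 + (\<Sum>w\<in>UNIV - {c}. exp \<bar>z 0 y - z 0 w\<bar>))"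
  have "h 0 > 0" by (simp add: h_def)
  have "k > 0" unfolding k_def using rate_pos by (intro divide_pos_pos sum_pos) auto
  have "K > 0" unfolding K_def using rate_pos by (intro mult_pos_pos add_pos_nonneg sum_nonneg) auto
  have deriv: "(h has_real_derivative h' t) (at t within {0..})" if "t \<ge> 0" for t
    unfolding h_def[abs_def] h'_def using exp_margin_has_deriv[OF that assms] .
  have h'_lower: "k \<le> h' t" if "t \<ge> 0" for t
  proof -
    have "k \<le> a * softmax (z t) c"
      using mult_left_mono[OF softmax_target_lower_bound[OF that] less_imp_le[OF rate_pos]]
      by (simp add: k_def)
    also have "\<dots> \<le> h' t"
      unfolding h'_def using rate_pos softmax_pos[of "z t" c] by (simp add: sum_nonneg)
    finally show ?thesis .
  qed
  have h'_upper: "h' t \<le> K" if "t \<ge> 0" for t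
  proof -
    have "(\<Sum>w\<in>UNIV - {c}. exp (z t w - z t y)) \<le> (\<Sum>w\<in>UNIV - {c}. exp \<bar>z 0 y - z 0 w\<bar>)"
    proof (rule sum_mono)
      fix w assume "w \<in> UNIV - {c}"
      then have "\<bar>z t y - z t w\<bar> \<le> \<bar>z 0 y - z 0 w\<bar>" using nontarget_gap_le[OF that assms] by simp
      then show "exp (z t w - z t y) \<le> exp \<bar>z 0 y - z 0 w\<bar>" by simp
    qed
    moreover have "0 \<le> 1 + (\<Sum>w\<in>UNIV - {c}. exp (z t w - z t y))"
      by (intro add_nonneg_nonneg sum_nonneg) auto
    ultimately show ?thesis
      unfolding h'_def K_def using rate_pos softmax_pos[of "z t" c] softmax_le_1[of "z t" c]
      by (intro mult_mono) auto
  qed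
  have "ln (h 0 + k * t) \<le> z t c - z t y \<and> z t c - z t y \<le> ln (h 0 + K * t)" if "t \<ge> 0" for t
  proof -
    have "h 0 + k * t \<le> h t" "h t \<le> h 0 + K * t"
      using DERIV_ge_imp_linear_lower_bound[OF deriv h'_lower that]
        DERIV_le_imp_linear_upper_bound[OF deriv h'_upper that] by simp_all
    moreover have "h 0 + k * t > 0" "h t > 0"
      using that \<open>k > 0\<close> \<open>h 0 > 0\<close> by (simp_all add: add_pos_nonneg h_def)
    ultimately have "ln (h 0 + k * t) \<le> ln (h t)" "ln (h t) \<le> ln (h 0 + K * t)"
      by (simp_all add: ln_mono)
    then show ?thesis by (simp add: h_def)
  qed
  then show ?thesis
    by (rule tendsto_div_ln_of_ln_linear_bounds[OF \<open>h 0 > 0\<close> \<open>k > 0\<close> \<open>K > 0\<close>])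
qed

lemma sum_eq_initial:
  assumes "t \<ge> 0"
  shows "(\<Sum>w\<in>UNIV. z t w) = (\<Sum>w\<in>UNIV. z 0 w)"
proof -
  have deriv: "((\<lambda>t. \<Sum>w\<in>UNIV. z t w) has_real_derivative 0) (at t within {0..})" if "t \<ge> 0" for t
  proof -
    have "(\<Sum>w\<in>UNIV. a * ((if w = c then 1 else 0) - softmax (z t) w)) = 0"
      using sum_softmax[of "z t"] by (simp add: sum_subtractf sum_distrib_left[symmetric])
    then show ?thesis using DERIV_sum[of UNIV z, OF has_deriv[OF that]] by simp
  qed
  show ?thesis
    using DERIV_ge_imp_linear_lower_bound[OF deriv, of 0 t] DERIV_le_imp_linear_upper_bound[OF deriv, of 0 t] assms
    by simp
qed

text \<open>The target coordinate is determined by the conserved total and the margins.\<close>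
lemma div_ln_tendsto: "((\<lambda>t. z t y / ln t) \<longlongrightarrow> (if y = c then 1 else 0) - 1 / real CARD('m)) at_top"
proof -
  define M where "M = real CARD('m)"
  define S0 where "S0 = (\<Sum>w\<in>UNIV. z 0 w)"
  define X where "X t = (\<Sum>w\<in>UNIV - {c}. z t c - z t w)" for t
  have "M > 0" by (simp add: M_def)
  have target_eq: "z t c = (S0 + X t) / M" if "t \<ge> 0" for t
  proof -
    have "X t = (M - 1) * z t c - (\<Sum>w\<in>UNIV - {c}. z t w)"
      by (simp add: X_def sum_subtractf M_def card_Diff_subset)
    moreover have "(\<Sum>w\<in>UNIV. z t w) = z t c + (\<Sum>w\<in>UNIV - {c}. z t w)"
      by (simp add: sum.remove[of UNIV c])
    ultimately show ?thesis
      using sum_eq_initial[OF that] \<open>M > 0\<close> by (simp add: S0_def field_simps)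
  qed
  have "((\<lambda>t. X t / ln t) \<longlongrightarrow> (\<Sum>w\<in>UNIV - {c}. 1)) at_top"
    unfolding X_def sum_divide_distrib by (intro tendsto_sum margin_div_ln_tendsto) simp
  then have "((\<lambda>t. (S0 / ln t + X t / ln t) / M) \<longlongrightarrow> (0 + (M - 1)) / M) at_top"
    by (intro tendsto_divide tendsto_add tendsto_const)
       (use \<open>M > 0\<close> in \<open>real_asymp, simp_all add: M_def card_Diff_subset\<close>)
  moreover have "\<forall>\<^sub>F t in at_top. (S0 / ln t + X t / ln t) / M = z t c / ln t"
    using eventually_ge_at_top[of 0]
    by eventually_elim (simp add: target_eq add_divide_distrib mult.commute)
  ultimately have target: "((\<lambda>t. z t c / ln t) \<longlongrightarrow> 1 - 1 / M) at_top"
    using \<open>M > 0\<close> by (auto intro: Lim_transform_eventually simp: field_simps)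
  show ?thesis
  proof (cases "y = c")
    case False
    have "((\<lambda>t. z t c / ln t - (z t c - z t y) / ln t) \<longlongrightarrow> (1 - 1 / M) - 1) at_top"
      by (intro tendsto_diff target margin_div_ln_tendsto False)
    then show ?thesis using False by (simp add: M_def diff_divide_distrib)
  qed (use target in \<open>simp add: M_def\<close>)
qed

end

lemma GDERIV_unique:
  assumes "GDERIV f x :> D" "GDERIV f x :> D'"
  shows "D = D'"
proof -
  have "(\<lambda>h. h \<bullet> D) = (\<lambda>h. h \<bullet> D')"
    using has_derivative_unique assms unfolding gderiv_def by blast
  then have "(D - D') \<bullet> (D - D') = 0"
    by (metis inner_diff_right right_minus_eq)
  then show ?thesis by simp
qed

lemma orthonormal_family_inner_sum:
  fixes B :: "'k::finite \<Rightarrow> 'a::real_inner"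
  assumes "orthonormal_family B"
  shows "(\<Sum>k\<in>UNIV. c k *\<^sub>R B k) \<bullet> B j = (c j :: real)"
proof -
  have "(\<Sum>k\<in>UNIV. c k *\<^sub>R B k) \<bullet> B j = (\<Sum>k\<in>UNIV. c k * (B k \<bullet> B j))"
    by (simp add: inner_sum_left)
  also have "\<dots> = (\<Sum>k\<in>UNIV. if k = j then c k else 0)"
    using assms unfolding orthonormal_family_def by (intro sum.cong) auto
  finally show ?thesis by simp
qed

lemma has_real_derivative_orthonormal_coordinate:
  fixes B :: "'k::finite \<Rightarrow> 'a::real_inner"
  assumes "orthonormal_family B"
    and "(W has_vector_derivative (\<Sum>k\<in>UNIV. c k *\<^sub>R B k)) (at t within S)"
  shows "((\<lambda>t. W t \<bullet> B j) has_real_derivative c j) (at t within S)"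
  using bounded_linear.has_vector_derivative[OF bounded_linear_inner_left assms(2), of "B j"]
  by (simp add: orthonormal_family_inner_sum[OF assms(1)] has_real_derivative_iff_has_vector_derivative)

text \<open>The component of \<open>W t\<close> orthogonal to all \<open>B k\<close> is conserved, so it vanishes after dividing by \<open>ln t\<close>.\<close>
lemma tendsto_div_ln_of_orthonormal_coordinates:
  fixes B :: "'k::finite \<Rightarrow> 'a::real_inner" and W :: "real \<Rightarrow> 'a"
  assumes orth: "orthonormal_family B"
    and flow: "\<And>t. t \<ge> 0 \<Longrightarrow> (W has_vector_derivative (\<Sum>k\<in>UNIV. c t k *\<^sub>R B k)) (at t within {0..})"
    and coord: "\<And>k. ((\<lambda>t. (W t \<bullet> B k) / ln t) \<longlongrightarrow> l k) at_top"
  shows "((\<lambda>t. (1 / ln t) *\<^sub>R W t) \<longlongrightarrow> (\<Sum>k\<in>UNIV. l k *\<^sub>R B k)) at_top"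
proof -
  define R where "R t = W t - (\<Sum>k\<in>UNIV. (W t \<bullet> B k) *\<^sub>R B k)" for t
  have "(R has_vector_derivative 0) (at t within {0..})" if "t \<ge> 0" for t
  proof -
    have "(R has_vector_derivative
        (\<Sum>k\<in>UNIV. c t k *\<^sub>R B k) - (\<Sum>k\<in>UNIV. c t k *\<^sub>R B k)) (at t within {0..})"
      unfolding R_def
      using flow[OF that] has_real_derivative_orthonormal_coordinate[OF orth flow[OF that]]
      by (auto intro!: derivative_eq_intros simp: has_real_derivative_iff_has_vector_derivative)
    then show ?thesis by simp
  qed
  then obtain R0 where R0: "\<And>t. t \<ge> 0 \<Longrightarrow> R t = R0"
    using has_derivative_zero_constant[of "{0::real..}" R] unfolding has_vector_derivative_def
    by (auto simp: convex_real_interval)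
  have "((\<lambda>t. (1 / ln t) *\<^sub>R R0 + (\<Sum>k\<in>UNIV. ((W t \<bullet> B k) / ln t) *\<^sub>R B k))
      \<longlongrightarrow> 0 *\<^sub>R R0 + (\<Sum>k\<in>UNIV. l k *\<^sub>R B k)) at_top"
    by (intro tendsto_add tendsto_scaleR tendsto_sum tendsto_const coord) real_asymp
  moreover have "\<forall>\<^sub>F t in at_top.
      (1 / ln t) *\<^sub>R R0 + (\<Sum>k\<in>UNIV. ((W t \<bullet> B k) / ln t) *\<^sub>R B k) = (1 / ln t) *\<^sub>R W t"
    using eventually_ge_at_top[of 0]
  proof eventually_elim
    case (elim t)
    have "W t = R0 + (\<Sum>k\<in>UNIV. (W t \<bullet> B k) *\<^sub>R B k)"
      using R0[OF elim] by (simp add: R_def algebra_simps)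
    then have "(1 / ln t) *\<^sub>R W t = (1 / ln t) *\<^sub>R (R0 + (\<Sum>k\<in>UNIV. (W t \<bullet> B k) *\<^sub>R B k))"
      by (rule arg_cong)
    also have "\<dots> = (1 / ln t) *\<^sub>R R0 + (\<Sum>k\<in>UNIV. ((W t \<bullet> B k) / ln t) *\<^sub>R B k)"
      by (simp add: scaleR_add_right scaleR_sum_right)
    finally show ?case by (rule sym)
  qed
  ultimately show ?thesis by (auto intro: Lim_transform_eventually)
qed

lemma orth_proj_eqI:
  assumes "subspace S" "q \<in> S" "\<And>s. s \<in> S \<Longrightarrow> (v - q) \<bullet> s = 0"
  shows "orth_proj S v = q"
  unfolding orth_proj_def
proof (rule the_equality)
  fix q' assume q': "q' \<in> S \<and> (\<forall>s\<in>S. (v - q') \<bullet> s = 0)"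
  then have "q' - q \<in> S" using assms(1,2) by (simp add: subspace_diff)
  then have "(v - q) \<bullet> (q' - q) = 0" "(v - q') \<bullet> (q' - q) = 0"
    using assms(3) q' by auto
  then have "(q' - q) \<bullet> (q' - q) = 0"
    by (simp add: inner_diff_left inner_diff_right inner_commute algebra_simps)
  then show "q' = q" by simp
qed (use assms in auto)

text \<open>The span of the differences is the orthogonal complement of \<open>\<Sum>y. u y\<close> within the span of \<open>u\<close>.\<close>
lemma orth_proj_span_differences:
  fixes u :: "'m::finite \<Rightarrow> 'a::real_inner"
  assumes "orthonormal_family u"
  shows "orth_proj (span {u i - u j | i j. True}) (u k)
           = u k - (1 / real CARD('m)) *\<^sub>R (\<Sum>y\<in>UNIV. u y)"
proof (rule orth_proj_eqI)
  define M where "M = real CARD('m)"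
  define D where "D = {u i - u j | i j. True}"
  have "u k - (1 / M) *\<^sub>R (\<Sum>y\<in>UNIV. u y) = (1 / M) *\<^sub>R (\<Sum>y\<in>UNIV. u k - u y)"
    by (simp add: sum_subtractf scaleR_diff_right real_vector.sum_constant_scale M_def)
  also have "\<dots> \<in> span D"
  proof (intro span_mul span_sum span_base)
    show "u k - u y \<in> D" for y unfolding D_def by blast
  qed
  finally show "u k - (1 / real CARD('m)) *\<^sub>R (\<Sum>y\<in>UNIV. u y) \<in> span {u i - u j | i j. True}"
    by (simp add: M_def D_def)
  fix s assume "s \<in> span {u i - u j | i j. True}"
  then have "s \<in> span D" by (simp add: D_def)
  moreover have "(\<Sum>y\<in>UNIV. u y) \<bullet> u i = 1" for i
    using assms unfolding orthonormal_family_def by (simp add: inner_sum_left)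
  then have "orthogonal (\<Sum>y\<in>UNIV. u y) d" if "d \<in> D" for d
    using that unfolding D_def orthogonal_def by (auto simp: inner_diff_right)
  ultimately have "orthogonal (\<Sum>y\<in>UNIV. u y) s"
    by (rule orthogonal_to_span)
  then show "(u k - (u k - (1 / real CARD('m)) *\<^sub>R (\<Sum>y\<in>UNIV. u y))) \<bullet> s = 0"
    by (simp add: orthogonal_def)
qed (rule subspace_span)

lemma sum_UNIV_pair:
  "(\<Sum>(x, y)\<in>(UNIV :: ('a::finite \<times> 'b::finite) set). g x y) = (\<Sum>x\<in>UNIV. \<Sum>y\<in>UNIV. g x y)"
  by (simp add: sum.cartesian_product del: UNIV_Times_UNIV flip: UNIV_Times_UNIV)

lemma inner_outer_outer: "outer a b \<bullet> outer a' b' = (a \<bullet> a') * (b \<bullet> b')"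
  unfolding outer_def inner_vec_def by (simp add: sum_product algebra_simps)

lemma inner_outer: "(W :: real^'d^'d) \<bullet> outer a b = a \<bullet> (W *v b)"
  unfolding outer_def inner_vec_def matrix_vector_mult_def
  by (simp add: sum_distrib_left algebra_simps)

lemma outer_sum_scaleR_left: "outer (\<Sum>y\<in>A. f y *\<^sub>R v y) b = (\<Sum>y\<in>A. f y *\<^sub>R outer (v y) b)"
  unfolding outer_def by (simp add: vec_eq_iff sum_distrib_left algebra_simps)

lemma orthonormal_family_outer:
  assumes "orthonormal_family e" "orthonormal_family u"
  shows "orthonormal_family (\<lambda>(x, y). outer (u y) (e x))"
  using assms unfolding orthonormal_family_def by (auto simp: inner_outer_outer)

lemma loss_eq:
  fixes e :: "'n::finite \<Rightarrow> real^'d" and u :: "'m::finite \<Rightarrow> real^'d"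
  shows "loss p e u fstar = (\<lambda>W. - (\<Sum>x\<in>UNIV. p x * (W \<bullet> outer (u (fstar x)) (e x)
       - ln (\<Sum>z\<in>UNIV. exp (W \<bullet> outer (u z) (e x))))))"
proof
  fix W :: "real^'d^'d"
  have "ln (pW e u W x (fstar x))
      = W \<bullet> outer (u (fstar x)) (e x) - ln (\<Sum>z\<in>UNIV. exp (W \<bullet> outer (u z) (e x)))" for x
    using sum_exp_pos[of "\<lambda>z. W \<bullet> outer (u z) (e x)"]
    unfolding pW_def by (simp add: ln_div inner_outer)
  then show "loss p e u fstar W = - (\<Sum>x\<in>UNIV. p x * (W \<bullet> outer (u (fstar x)) (e x)
       - ln (\<Sum>z\<in>UNIV. exp (W \<bullet> outer (u z) (e x)))))"
    unfolding loss_def by simp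
qed

lemma loss_has_gradient:
  "GDERIV (loss p e u fstar) W :> - (\<Sum>(x, y)\<in>UNIV.
     (p x * ((if y = fstar x then 1 else 0) - softmax (\<lambda>z. W \<bullet> outer (u z) (e x)) y)) *\<^sub>R outer (u y) (e x))"
proof -
  let ?B = "\<lambda>x y. outer (u y) (e x)"
  let ?Z = "\<lambda>x. \<Sum>z\<in>UNIV. exp (W \<bullet> ?B x z)"
  have "(loss p e u fstar has_derivative (\<lambda>h. - (\<Sum>x\<in>UNIV. p x * (h \<bullet> ?B x (fstar x)
       - (\<Sum>z\<in>UNIV. exp (W \<bullet> ?B x z) * (h \<bullet> ?B x z)) / ?Z x)))) (at W)"
    unfolding loss_eq using sum_exp_pos
    by (auto intro!: derivative_eq_intros simp: sum_divide_distrib[symmetric] divide_inverse mult.commute)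
  moreover have "- (\<Sum>x\<in>UNIV. p x * (h \<bullet> ?B x (fstar x) - (\<Sum>z\<in>UNIV. exp (W \<bullet> ?B x z) * (h \<bullet> ?B x z)) / ?Z x))
      = h \<bullet> - (\<Sum>(x, y)\<in>UNIV. (p x * ((if y = fstar x then 1 else 0)
            - softmax (\<lambda>z. W \<bullet> ?B x z) y)) *\<^sub>R ?B x y)" for h
  proof -
    have "(\<Sum>y\<in>UNIV. p x * ((if y = fstar x then 1 else 0) - softmax (\<lambda>z. W \<bullet> ?B x z) y) * (h \<bullet> ?B x y))
        = p x * (h \<bullet> ?B x (fstar x) - (\<Sum>z\<in>UNIV. exp (W \<bullet> ?B x z) * (h \<bullet> ?B x z)) / ?Z x)" for x
      by (simp add: softmax_def algebra_simps sum_subtractf sum_distrib_left sum_divide_distrib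
          if_distrib[of "\<lambda>v. v * _"] if_distrib[of "\<lambda>v. _ * v"] cong: if_cong)
    then show ?thesis
      by (simp add: inner_sum_right sum_UNIV_pair)
  qed
  ultimately show ?thesis unfolding gderiv_def by simp
qed

lemma sum_outer_orth_proj_span_differences:
  fixes u :: "'m::finite \<Rightarrow> real^'d" and e :: "'n::finite \<Rightarrow> real^'d"
  assumes "orthonormal_family u"
  shows "(\<Sum>(x, y)\<in>UNIV. ((if y = f x then 1 else 0) - 1 / real CARD('m)) *\<^sub>R outer (u y) (e x))
       = (\<Sum>x\<in>UNIV. outer (orth_proj (span {u i - u j | i j. True}) (u (f x))) (e x))"
proof -
  have "u (f x) - (1 / real CARD('m)) *\<^sub>R (\<Sum>y\<in>UNIV. u y)
      = (\<Sum>y\<in>UNIV. ((if y = f x then 1 else 0) - 1 / real CARD('m)) *\<^sub>R u y)" for x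
  proof -
    have "(\<Sum>y\<in>UNIV. (if y = f x then 1 else 0) *\<^sub>R u y) = u (f x)"
      by (simp add: if_distrib[of "\<lambda>r. r *\<^sub>R _"] cong: if_cong)
    then show ?thesis by (simp add: scaleR_diff_left sum_subtractf scaleR_sum_right)
  qed
  then show ?thesis
    unfolding orth_proj_span_differences[OF assms]
    by (simp add: outer_sum_scaleR_left sum_UNIV_pair)
qed

theorem theorem3:
  fixes e :: "'n::finite \<Rightarrow> real^'d"
    and u :: "'m::finite \<Rightarrow> real^'d"
    and fstar :: "'n \<Rightarrow> 'm"
    and p :: "'n \<Rightarrow> real"
    and W0 :: "real^'d^'d"
    and W :: "real \<Rightarrow> real^'d^'d"
  assumes "CARD('n) \<ge> 2" and "CARD('m) \<ge> 2"
    and "CARD('d) \<ge> max CARD('n) CARD('m)"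
    and "orthonormal_family e" and "orthonormal_family u"
    and "\<forall>x. p x > 0" and "(\<Sum>x\<in>UNIV. p x) = 1"
    and "W 0 = W0"
    and "\<forall>t\<ge>0. \<exists>G. (GDERIV (loss p e u fstar) (W t) :> G)
                    \<and> (W has_vector_derivative (- G)) (at t within {0..})"
  shows "\<exists>\<kappa>>0. ((\<lambda>t. (1 / ln t) *\<^sub>R W t) \<longlongrightarrow>
           \<kappa> *\<^sub>R (\<Sum>x\<in>UNIV. outer (orth_proj (span {u i - u j | i j. True}) (u (fstar x))) (e x)))
         at_top"
proof -
  define B :: "'n \<times> 'm \<Rightarrow> real^'d^'d" where "B = (\<lambda>(x, y). outer (u y) (e x))"
  define c where "c t = (\<lambda>(x, y). p x * ((if y = fstar x then 1 else 0) - softmax (\<lambda>z. W t \<bullet> B (x, z)) y))"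
    for t
  have orth: "orthonormal_family B"
    unfolding B_def using orthonormal_family_outer[OF assms(4,5)] .
  have flow: "(W has_vector_derivative (\<Sum>k\<in>UNIV. c t k *\<^sub>R B k)) (at t within {0..})" if "t \<ge> 0" for t
  proof -
    obtain G where "GDERIV (loss p e u fstar) (W t) :> G" "(W has_vector_derivative - G) (at t within {0..})"
      using assms(9) \<open>t \<ge> 0\<close> by blast
    with GDERIV_unique[OF this(1) loss_has_gradient] show ?thesis
      by (simp add: B_def c_def case_prod_beta)
  qed
  have "((\<lambda>t. (W t \<bullet> B (x, y)) / ln t) \<longlongrightarrow> (if y = fstar x then 1 else 0) - 1 / real CARD('m)) at_top"
    for x y
  proof -
    interpret softmax_flow "p x" "fstar x" "\<lambda>t y. W t \<bullet> B (x, y)"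
    proof
      fix t :: real and y assume "t \<ge> 0"
      from has_real_derivative_orthonormal_coordinate[OF orth flow[OF this], of "(x, y)"]
      show "((\<lambda>t. W t \<bullet> B (x, y)) has_real_derivative p x * ((if y = fstar x then 1 else 0)
          - softmax (\<lambda>y. W t \<bullet> B (x, y)) y)) (at t within {0..})"
        by (simp add: c_def)
    qed (use assms(6) in blast)
    show ?thesis by (rule div_ln_tendsto)
  qed
  then have "((\<lambda>t. (1 / ln t) *\<^sub>R W t) \<longlongrightarrow>
      (\<Sum>(x, y)\<in>UNIV. ((if y = fstar x then 1 else 0) - 1 / real CARD('m)) *\<^sub>R outer (u y) (e x))) at_top"
    using tendsto_div_ln_of_orthonormal_coordinates[OF orth flow] by (simp add: B_def case_prod_beta)
  then show ?thesis
    unfolding sum_outer_orth_proj_span_differences[OF assms(5)] by (intro exI[of _ 1]) simp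
qed

end
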